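(* Let $E$ be a locally convex space over $K$ and $\phi:E\to\mathbb R$ a convex function attaining its minimum value at $0$. Then: (1) $\phi(\lambda x)=\phi(x)$ for all $x\in E$ and $\lambda\in K$ with $|\lambda|=1$; (2) $\phi(x+y)\le\max(\phi(x),\phi(y))$ for all $x,y\in E$.
   Context: $K$ is a field complete with respect to a non-trivial non-archimedean absolute value, $B_K=\{x\in K:|x|\le1\}$. A function $\phi:E\to\mathbb R$ is convex if for all $n$, $x_1,\dots,x_n\in E$ and $\lambda_1,\dots,\lambda_n\in B_K$ with $\sum\lambda_i=1$ one has $\phi(\sum\lambda_ix_i)\le\max_i|\lambda_i|\phi(x_i)$. *)

theory Defs
  imports "HOL-Analysis.Analysis"
begin

definition nonarch_abs :: "('k::field \<Rightarrow> real) \<Rightarrow> bool" where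
  "nonarch_abs absv \<longleftrightarrow>
     (\<forall>x. absv x \<ge> 0) \<and> (\<forall>x. absv x = 0 \<longleftrightarrow> x = 0) \<and>
     (\<forall>x y. absv (x * y) = absv x * absv y) \<and>
     (\<forall>x y. absv (x + y) \<le> max (absv x) (absv y))"

definition nontrivial_abs :: "('k::field \<Rightarrow> real) \<Rightarrow> bool" where
  "nontrivial_abs absv \<longleftrightarrow> (\<exists>x. x \<noteq> 0 \<and> absv x \<noteq> 1)"

definition complete_abs :: "('k::field \<Rightarrow> real) \<Rightarrow> bool" where
  "complete_abs absv \<longleftrightarrow>
     (\<forall>s::nat \<Rightarrow> 'k. (\<forall>e>0. \<exists>N. \<forall>m\<ge>N. \<forall>n\<ge>N. absv (s m - s n) < e) \<longrightarrow>
        (\<exists>l. (\<lambda>n. absv (s n - l)) \<longlonglongrightarrow> 0))"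

definition valued_field :: "('k::field \<Rightarrow> real) \<Rightarrow> bool" where
  "valued_field absv \<longleftrightarrow> nonarch_abs absv \<and> nontrivial_abs absv \<and> complete_abs absv"

definition abs_convex_set ::
  "('k::field \<Rightarrow> real) \<Rightarrow> ('k \<Rightarrow> 'e::ab_group_add \<Rightarrow> 'e) \<Rightarrow> 'e set \<Rightarrow> bool" where
  "abs_convex_set absv smul C \<longleftrightarrow>
     (\<forall>x\<in>C. \<forall>y\<in>C. \<forall>a b. absv a \<le> 1 \<and> absv b \<le> 1 \<longrightarrow> smul a x + smul b y \<in> C)"

definition tvs ::
  "('k::field \<Rightarrow> real) \<Rightarrow> ('k \<Rightarrow> 'e::ab_group_add \<Rightarrow> 'e) \<Rightarrow> 'e topology \<Rightarrow> bool" where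
  "tvs absv smul T \<longleftrightarrow>
     vector_space smul \<and> topspace T = UNIV \<and>
     (\<forall>x y W. openin T W \<and> x + y \<in> W \<longrightarrow>
        (\<exists>U V. openin T U \<and> openin T V \<and> x \<in> U \<and> y \<in> V \<and> (\<forall>u\<in>U. \<forall>v\<in>V. u + v \<in> W))) \<and>
     (\<forall>a x W. openin T W \<and> smul a x \<in> W \<longrightarrow>
        (\<exists>r>0. \<exists>U. openin T U \<and> x \<in> U \<and>
           (\<forall>b. \<forall>u\<in>U. absv (b - a) < r \<longrightarrow> smul b u \<in> W)))"

definition locally_convex_space ::
  "('k::field \<Rightarrow> real) \<Rightarrow> ('k \<Rightarrow> 'e::ab_group_add \<Rightarrow> 'e) \<Rightarrow> 'e topology \<Rightarrow> bool" where
  "locally_convex_space absv smul T \<longleftrightarrow>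
     tvs absv smul T \<and>
     (\<forall>W. openin T W \<and> 0 \<in> W \<longrightarrow>
        (\<exists>C. abs_convex_set absv smul C \<and> C \<subseteq> W \<and>
             (\<exists>U. openin T U \<and> 0 \<in> U \<and> U \<subseteq> C)))"

definition convex_fun ::
  "('k::field \<Rightarrow> real) \<Rightarrow> ('k \<Rightarrow> 'e::ab_group_add \<Rightarrow> 'e) \<Rightarrow> ('e \<Rightarrow> real) \<Rightarrow> bool" where
  "convex_fun absv smul \<phi> \<longleftrightarrow>
     (\<forall>n (x::nat \<Rightarrow> 'e) (l::nat \<Rightarrow> 'k).
        (\<forall>i<n. absv (l i) \<le> 1) \<and> (\<Sum>i<n. l i) = 1 \<longrightarrow>
        \<phi> (\<Sum>i<n. smul (l i) (x i)) \<le> Max ((\<lambda>i. absv (l i) * \<phi> (x i)) ` {..<n}))"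

end

theory Submission
  imports Defs
begin

text \<open>Only the module structure and the multiplicativity of the absolute value matter. Both parts come from writing a vector
as a combination whose coefficients sum to 1 by padding it with copies of the minimiser 0:
\<open>c x = c x + 1 0 + (-c) 0\<close> gives \<open>\<phi>(c x) \<le> \<phi> x\<close> for \<open>|c| = 1\<close>, with equality after applying
the same bound to \<open>c\<inverse>\<close>, and \<open>x + y = 1 x + 1 y + (-1) 0\<close> gives the ultrametric inequality.\<close>

lemma nonarch_abs_one:
  assumes "nonarch_abs absv"
  shows "absv 1 = 1"
proof -
  have mult: "absv (1 * 1) = absv 1 * absv 1" and nonzero: "absv 1 \<noteq> 0"
    using assms unfolding nonarch_abs_def by (blast, simp)
  from mult have "absv 1 * (absv 1 - 1) = 0"
    by (simp add: algebra_simps)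
  with nonzero show ?thesis
    by simp
qed

lemma nonarch_abs_minus:
  assumes "nonarch_abs absv"
  shows "absv (- c) = absv c"
proof -
  have mult: "\<And>x y. absv (x * y) = absv x * absv y" and nonneg: "absv (- 1) \<ge> 0"
    using assms unfolding nonarch_abs_def by blast+
  have "(absv (- 1))\<^sup>2 = 1"
    using mult[of "- 1" "- 1"] nonarch_abs_one[OF assms] by (simp add: power2_eq_square)
  with nonneg have "absv (- 1) = 1"
    by (simp add: power2_eq_1_iff)
  then show ?thesis
    using mult[of "- 1" c] by simp
qed

lemma nonarch_abs_inverse:
  assumes "nonarch_abs absv"
  shows "absv (inverse c) = inverse (absv c)"
proof (cases "c = 0")
  case True
  then show ?thesis
    using assms unfolding nonarch_abs_def by simp (metis inverse_zero)
next
  case False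
  have "absv c * absv (inverse c) = 1"
    using assms False nonarch_abs_one[OF assms] unfolding nonarch_abs_def
    by (metis right_inverse)
  then show ?thesis
    by (simp add: inverse_unique)
qed

lemma convex_fun_three_points:
  assumes "convex_fun absv smul \<phi>"
    and "absv p \<le> 1" "absv q \<le> 1" "absv r \<le> 1" "p + q + r = 1"
  shows "\<phi> (smul p a + smul q b + smul r c)
           \<le> max (absv p * \<phi> a) (max (absv q * \<phi> b) (absv r * \<phi> c))"
proof -
  have "\<forall>i<3. absv ([p, q, r] ! i) \<le> 1"
    using assms by (auto simp: numeral_3_eq_3 less_Suc_eq)
  moreover have "(\<Sum>i<3. [p, q, r] ! i) = 1"
    using assms by (simp add: numeral_3_eq_3 lessThan_Suc add.commute add.left_commute)
  ultimately have "\<phi> (\<Sum>i<3. smul ([p, q, r] ! i) ([a, b, c] ! i))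
                     \<le> Max ((\<lambda>i. absv ([p, q, r] ! i) * \<phi> ([a, b, c] ! i)) ` {..<3})"
    using assms(1) unfolding convex_fun_def by blast
  moreover have "(\<Sum>i<3. smul ([p, q, r] ! i) ([a, b, c] ! i)) = smul p a + smul q b + smul r c"
    by (simp add: numeral_3_eq_3 lessThan_Suc add.commute add.left_commute)
  moreover have "Max ((\<lambda>i. absv ([p, q, r] ! i) * \<phi> ([a, b, c] ! i)) ` {..<3})
                   = max (absv p * \<phi> a) (max (absv q * \<phi> b) (absv r * \<phi> c))"
    by (simp add: numeral_3_eq_3 lessThan_Suc max.commute max.left_commute)
  ultimately show ?thesis
    by simp
qed

lemma convex_fun_scale_le:
  assumes "nonarch_abs absv" "module smul" "convex_fun absv smul \<phi>"
    and min0: "\<forall>x. \<phi> 0 \<le> \<phi> x"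
    and "absv c = 1"
  shows "\<phi> (smul c x) \<le> \<phi> x"
proof -
  have "\<phi> (smul c x + smul 1 0 + smul (- c) 0)
          \<le> max (absv c * \<phi> x) (max (absv 1 * \<phi> 0) (absv (- c) * \<phi> 0))"
    using assms nonarch_abs_one[OF assms(1)] nonarch_abs_minus[OF assms(1)]
    by (intro convex_fun_three_points) auto
  moreover have "smul c x + smul 1 0 + smul (- c) 0 = smul c x"
    by (simp add: module.scale_zero_right[OF \<open>module smul\<close>])
  ultimately show ?thesis
    using assms nonarch_abs_one[OF assms(1)] nonarch_abs_minus[OF assms(1)] min0[rule_format, of x]
    by auto
qed

lemma convex_fun_scale_unimodular:
  assumes "nonarch_abs absv" "module smul" "convex_fun absv smul \<phi>"
    and "\<forall>x. \<phi> 0 \<le> \<phi> x"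
    and "absv c = 1"
  shows "\<phi> (smul c x) = \<phi> x"
proof -
  have "absv c \<noteq> 0"
    using assms(5) by simp
  then have "c \<noteq> 0"
    using assms(1) unfolding nonarch_abs_def by blast
  then have "smul (inverse c) (smul c x) = x"
    by (simp add: module.scale_scale[OF \<open>module smul\<close>] module.scale_one[OF \<open>module smul\<close>])
  moreover have "\<phi> (smul (inverse c) (smul c x)) \<le> \<phi> (smul c x)"
    using assms nonarch_abs_inverse[OF assms(1)] by (intro convex_fun_scale_le[of absv]) auto
  ultimately have "\<phi> x \<le> \<phi> (smul c x)"
    by simp
  then show ?thesis
    using convex_fun_scale_le[OF assms, of x] by linarith
qed

lemma convex_fun_add_le_max:
  assumes "nonarch_abs absv" "module smul" "convex_fun absv smul \<phi>"
    and min0: "\<forall>x. \<phi> 0 \<le> \<phi> x"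
  shows "\<phi> (x + y) \<le> max (\<phi> x) (\<phi> y)"
proof -
  have "\<phi> (smul 1 x + smul 1 y + smul (- 1) 0)
          \<le> max (absv 1 * \<phi> x) (max (absv 1 * \<phi> y) (absv (- 1) * \<phi> 0))"
    using assms nonarch_abs_one[OF assms(1)] nonarch_abs_minus[OF assms(1)]
    by (intro convex_fun_three_points) auto
  moreover have "smul 1 x + smul 1 y + smul (- 1) 0 = x + y"
    by (simp add: module.scale_zero_right[OF \<open>module smul\<close>] module.scale_one[OF \<open>module smul\<close>])
  ultimately show ?thesis
    using assms nonarch_abs_one[OF assms(1)] nonarch_abs_minus[OF assms(1)] min0[rule_format, of x]
    by auto
qed

theorem mainTheorem6:
  fixes absv :: "'k::field \<Rightarrow> real"
    and smul :: "'k \<Rightarrow> 'e::ab_group_add \<Rightarrow> 'e"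
    and T :: "'e topology"
    and \<phi> :: "'e \<Rightarrow> real"
  assumes "valued_field absv"
    and "locally_convex_space absv smul T"
    and "convex_fun absv smul \<phi>"
    and "\<forall>x. \<phi> 0 \<le> \<phi> x"
  shows "(\<forall>x c. absv c = 1 \<longrightarrow> \<phi> (smul c x) = \<phi> x) \<and>
         (\<forall>x y. \<phi> (x + y) \<le> max (\<phi> x) (\<phi> y))"
proof -
  have nonarch: "nonarch_abs absv"
    using assms(1) unfolding valued_field_def by blast
  have "vector_space smul"
    using assms(2) unfolding locally_convex_space_def tvs_def by blast
  then have "module smul"
    by (simp add: module_iff_vector_space)
  then show ?thesis
    using convex_fun_scale_unimodular[OF nonarch _ assms(3,4)]
      convex_fun_add_le_max[OF nonarch _ assms(3,4)] by blast
qed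

end
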